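(* Let $\lambda>2/\sqrt3$ and let $\mathcal M_2$ be a set of $2$ or $3$ pairs $ab$ of points of $\mathbb R^2$ such that all endpoints of all pairs are pairwise distinct, $\|a\|+\|b\|=\lambda\|a-b\|$ for every $ab\in\mathcal M_2$, and $o\in\operatorname{conv}\{\ell_{ab}: ab\in\mathcal M_2\}$, where $o$ is the origin. Let $G$ be the graph whose vertex set $V(G)$ is the set of all endpoints of pairs in $\mathcal M_2$, with blue edges $E_b(G)=\mathcal M_2$ and red edges $E_r(G)=\{xy: x,y\in V(G),\ \|x\|+\|y\|<\lambda\|x-y\|\}$. If there is a vertex $x\in V(G)$ such that $\angle(x,y)<2\pi/3$ for every $y\in V(G)\setminus\{x\}$, then $G$ contains an alternating cycle.
   Context: $\ell_{ab}=\dfrac{\|b\|}{\|a\|+\|b\|}a+\dfrac{\|a\|}{\|a\|+\|b\|}b$. $\angle(x,y)\in[0,\pi]$ denotes the smallest nonnegative angle between nonzero vectors $x,y$ (all vertices of $G$ are nonzero since $\lambda>1$). An alternating cycle is a simple cycle of even length in $G$ whose edges alternate between blue edges and red edges. *)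

theory Defs
  imports "HOL-Analysis.Analysis"
begin

type_synonym pt = "real^2"

definition vangle :: "pt \<Rightarrow> pt \<Rightarrow> real" where
  "vangle x y = arccos (inner x y / (norm x * norm y))"

definition ell :: "pt \<Rightarrow> pt \<Rightarrow> pt" where
  "ell a b = (norm b / (norm a + norm b)) *\<^sub>R a + (norm a / (norm a + norm b)) *\<^sub>R b"

text \<open>Graph G built from a matching M (set of unordered pairs, each a 2-element set).\<close>
definition vertices :: "pt set set \<Rightarrow> pt set" where
  "vertices M = \<Union>M"

definition blue_edges :: "pt set set \<Rightarrow> pt set set" where
  "blue_edges M = M"

definition red_edges :: "real \<Rightarrow> pt set set \<Rightarrow> pt set set" where
  "red_edges lam M = {{x, y} | x y. x \<in> vertices M \<and> y \<in> vertices M \<and>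
                        norm x + norm y < lam * norm (x - y)}"

definition alternating_cycle :: "pt set set \<Rightarrow> pt set set \<Rightarrow> pt list \<Rightarrow> bool" where
  "alternating_cycle B R vs \<longleftrightarrow>
     (let n = length vs in
       distinct vs \<and> n \<ge> 3 \<and> even n \<and>
       (\<forall>i<n. {vs ! i, vs ! ((i + 1) mod n)} \<in> B \<union> R) \<and>
       (\<forall>i<n. {vs ! i, vs ! ((i + 1) mod n)} \<in> B \<longleftrightarrow>
               {vs ! ((i + 1) mod n), vs ! ((i + 2) mod n)} \<in> R))"

end

theory Submission
  imports Defs
begin

text \<open>Measure polar angles from the direction of x. Every vertex then has an angle in
  (-2pi/3, 2pi/3), and two vertices whose angles differ by at least 2pi/3 span an angle of at
  least 2pi/3, so for lam > 2/sqrt 3 they form a red pair. Hence every blue pair is narrower than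
  2pi/3, and l_ab has positive inner product with every direction within pi/2 of the angular
  midpoint of a and b. If the midpoints of the two pairs avoiding x were less than pi apart, the
  three midpoints (the one of the pair of x lies within pi/3 of the axis) would fit into an arc of
  length less than pi, and all l_ab would lie in an open half-plane, contradicting
  o \<in> conv {l_ab}. So these two midpoints are at least pi apart, and as both pairs are narrower
  than 2pi/3 their endpoints can be matched crosswise at angular distance at least 2pi/3. The two
  red edges so obtained close an alternating 4-cycle with the two blue ones.\<close>

definition perp :: "pt \<Rightarrow> pt" where
  "perp X = vector [- X$2, X$1]"

definition rot :: "real \<Rightarrow> pt \<Rightarrow> pt" where
  "rot t X = cos t *\<^sub>R X + sin t *\<^sub>R perp X"

lemma inner_perp_right [simp]: "inner X (perp X) = 0"
  by (simp add: perp_def inner_vec_def sum_2)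

lemma inner_perp_left [simp]: "inner (perp X) X = 0"
  by (simp add: perp_def inner_vec_def sum_2)

lemma inner_perp_perp [simp]: "inner (perp X) (perp Y) = inner X Y"
  by (simp add: perp_def inner_vec_def sum_2 add.commute)

lemma rot_0 [simp]: "rot 0 X = X"
  by (simp add: rot_def)

lemma inner_rot: "inner (rot s X) (rot t X) = cos (s - t) * inner X X"
  by (simp add: rot_def inner_add_left inner_add_right cos_diff algebra_simps)

lemma norm_rot [simp]: "norm (rot t X) = norm X"
  using inner_rot[of t X t] by (simp add: norm_eq_sqrt_inner)

lemma perp_decomposition:
  assumes "norm X = 1"
  shows "w = inner w X *\<^sub>R X + inner w (perp X) *\<^sub>R perp X"
proof -
  have "X$1 * X$1 + X$2 * X$2 = 1"
    using assms by (simp add: norm_eq_sqrt_inner inner_vec_def sum_2)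
  moreover have "inner w X * X$1 + inner w (perp X) * perp X $ 1 = w$1 * (X$1 * X$1 + X$2 * X$2)"
    "inner w X * X$2 + inner w (perp X) * perp X $ 2 = w$2 * (X$1 * X$1 + X$2 * X$2)"
    by (simp_all add: inner_vec_def sum_2 perp_def algebra_simps)
  ultimately show ?thesis
    unfolding vec_eq_iff forall_2 by simp
qed

lemma polar_angle_within_sector:
  assumes X: "norm X = 1" and v: "v \<noteq> 0" and near: "inner v X > - norm v / 2"
  obtains \<theta> where "\<bar>\<theta>\<bar> < 2*pi/3" "v = norm v *\<^sub>R rot \<theta> X"
proof -
  define w where "w = v /\<^sub>R norm v"
  define p where "p = inner w X"
  define q where "q = inner w (perp X)"
  have w: "w = p *\<^sub>R X + q *\<^sub>R perp X"
    unfolding p_def q_def by (rule perp_decomposition[OF X])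
  have "inner X X = 1"
    using X by (simp add: power2_norm_eq_inner[symmetric])
  then have "p * p + q * q = inner (p *\<^sub>R X + q *\<^sub>R perp X) (p *\<^sub>R X + q *\<^sub>R perp X)"
    by (simp add: inner_add_left inner_add_right)
  also have "\<dots> = (norm w)\<^sup>2"
    by (simp flip: w add: power2_norm_eq_inner)
  also have "\<dots> = 1"
    using v by (simp add: w_def)
  finally have pq: "p\<^sup>2 + q\<^sup>2 = 1" by (simp add: power2_eq_square)
  then have "p\<^sup>2 \<le> 1"
    by (smt (verit) zero_le_power2)
  then have p: "-1 \<le> p" "p \<le> 1"
    by (simp_all add: abs_square_le_1 abs_le_iff)
  have "p > -1/2"
    using near v by (simp add: p_def w_def field_simps)
  then have "arccos p < 2*pi/3"
    using arccos_less_arccos[of "-1/2" p] p by simp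
  define \<theta> where "\<theta> = (if q \<ge> 0 then arccos p else - arccos p)"
  have "sin (arccos p) = sqrt (1 - p\<^sup>2)"
    using p by (simp add: sin_arccos_abs)
  also have "1 - p\<^sup>2 = q\<^sup>2"
    using pq by simp
  finally have "sin (arccos p) = \<bar>q\<bar>"
    by simp
  then have "rot \<theta> X = w"
    using p by (simp add: \<theta>_def rot_def w)
  moreover have "\<bar>\<theta>\<bar> < 2*pi/3"
    using \<open>arccos p < 2*pi/3\<close> arccos_lbound[OF p] by (simp add: \<theta>_def)
  ultimately show ?thesis
    using that v by (simp add: w_def)
qed

lemma inner_gt_of_vangle_less:
  assumes "x \<noteq> 0" "v \<noteq> 0" "vangle x v < 2*pi/3"
  shows "inner x v > - (norm x * norm v) / 2"
proof -
  define c where "c = inner x v / (norm x * norm v)"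
  have "\<bar>c\<bar> \<le> 1"
    using Cauchy_Schwarz_ineq2[of x v] assms(1,2) by (simp add: c_def abs_divide abs_mult divide_le_eq)
  moreover have "arccos c < arccos (-1/2)"
    using assms(3) by (simp add: vangle_def c_def)
  ultimately have "c > -1/2"
    using arccos_le_arccos[of c "-1/2"] by (cases "c > -1/2") (auto simp: abs_le_iff)
  then show ?thesis
    using assms(1,2) by (simp add: c_def field_simps)
qed

lemma cos_le_minus_half:
  fixes d :: real
  assumes "2*pi/3 \<le> \<bar>d\<bar>" "\<bar>d\<bar> \<le> 4*pi/3"
  shows "cos d \<le> -1/2"
proof -
  have "cos d = - cos (\<bar>d\<bar> - pi)"
    by (simp add: abs_if cos_diff)
  moreover have "\<bar>\<bar>d\<bar> - pi\<bar> \<le> pi/3"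
    unfolding abs_diff_le_iff using assms by linarith
  then have "cos (pi/3) \<le> cos \<bar>\<bar>d\<bar> - pi\<bar>"
    by (intro cos_monotone_0_pi_le) auto
  ultimately show ?thesis
    by (simp add: cos_60)
qed

lemma norm_add_norm_less_if_wide_angle:
  fixes v w :: "'a::real_inner"
  assumes lam: "lam > 2 / sqrt 3" and v: "v \<noteq> 0" and w: "w \<noteq> 0"
    and wide: "inner v w \<le> - (norm v * norm w) / 2"
  shows "norm v + norm w < lam * norm (v - w)"
proof -
  have "2 < lam * sqrt 3"
    using lam by (simp add: field_simps)
  then have "2\<^sup>2 < (lam * sqrt 3)\<^sup>2"
    by (rule power_strict_mono) auto
  then have lam2: "4 / 3 < lam\<^sup>2"
    by (simp add: power_mult_distrib)
  have "(norm v + norm w)\<^sup>2 \<le> 4/3 * ((norm v)\<^sup>2 + (norm w)\<^sup>2 + norm v * norm w)"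
    using zero_le_power2[of "norm v - norm w"] by (simp add: power2_sum power2_diff)
  also have "\<dots> \<le> 4/3 * (norm (v - w))\<^sup>2"
    using wide dot_norm_neg[of v w] by simp
  finally have le: "(norm v + norm w)\<^sup>2 \<le> 4/3 * (norm (v - w))\<^sup>2" .
  have "0 < (norm v + norm w)\<^sup>2"
    using v w by (intro zero_less_power add_pos_pos) auto
  with le have "0 < (norm (v - w))\<^sup>2"
    by linarith
  from mult_strict_right_mono[OF lam2 this] le
  have "(norm v + norm w)\<^sup>2 < (lam * norm (v - w))\<^sup>2"
    by (simp add: power_mult_distrib)
  moreover have "0 \<le> lam * norm (v - w)"
    using lam less_trans[of 0 "2 / sqrt 3" lam] by simp
  ultimately show ?thesis
    by (rule power2_less_imp_less)
qed

lemma inner_scaled_rot: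
  assumes "norm X = 1" "v = r *\<^sub>R rot s X" "w = q *\<^sub>R rot t X"
  shows "inner v w = r * q * cos (s - t)"
  using assms by (simp add: inner_rot dot_square_norm)

lemma inner_ell_rot_pos:
  assumes X: "norm X = 1" and a: "a = r *\<^sub>R rot s X" and b: "b = q *\<^sub>R rot t X"
    and r: "r > 0" and q: "q > 0"
    and width: "\<bar>s - t\<bar> < pi" and centre: "\<bar>(s + t) / 2 - m\<bar> < pi / 2"
  shows "inner (ell a b) (rot m X) > 0"
proof -
  have "ell a b = (r * q / (r + q)) *\<^sub>R (rot s X + rot t X)"
    using X a b r q by (simp add: ell_def algebra_simps)
  then have "inner (ell a b) (rot m X) = r * q / (r + q) * (cos (s - m) + cos (t - m))"
    using X by (simp add: inner_add_left inner_rot dot_square_norm)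
  also have "cos (s - m) + cos (t - m) = 2 * cos (((s - m) + (t - m)) / 2) * cos (((s - m) - (t - m)) / 2)"
    by (rule cos_plus_cos)
  also have "((s - m) + (t - m)) / 2 = (s + t) / 2 - m"
    by simp
  also have "((s - m) - (t - m)) / 2 = (s - t) / 2"
    by simp
  also have "r * q / (r + q) * (2 * cos ((s + t) / 2 - m) * cos ((s - t) / 2)) > 0"
  proof -
    have cos_pos: "0 < cos y" if "\<bar>y\<bar> < pi / 2" for y
      using that by (intro cos_gt_zero_pi) (simp_all add: abs_less_iff)
    have "cos ((s + t) / 2 - m) > 0"
      using centre by (rule cos_pos)
    moreover have "cos ((s - t) / 2) > 0"
      using width by (intro cos_pos) simp
    ultimately show ?thesis
      using r q by simp
  qed
  finally show ?thesis .
qed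

lemma zero_notin_convex_hull_if_inner_pos:
  fixes w :: "'a::real_inner"
  assumes "\<forall>z\<in>S. inner z w > 0"
  shows "0 \<notin> convex hull S"
proof -
  have "convex hull S \<subseteq> {z. inner w z > 0}"
    using assms by (intro hull_minimal convex_halfspace_gt) (auto simp: inner_commute)
  then show ?thesis
    by auto
qed

lemma common_centre_of_close_reals:
  fixes a b c r :: real
  assumes "\<bar>a - b\<bar> < 2 * r" "\<bar>a - c\<bar> < 2 * r" "\<bar>b - c\<bar> < 2 * r"
  shows "\<exists>m. \<bar>a - m\<bar> < r \<and> \<bar>b - m\<bar> < r \<and> \<bar>c - m\<bar> < r"
  using assms
  by (intro exI[of _ "(max a (max b c) + min a (min b c)) / 2"])
    (auto simp: abs_less_iff max_def min_def field_simps)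

lemma crosswise_far_if_opposite:
  fixes tc td te tf r :: real
  assumes "\<bar>tc - td\<bar> < 2 * r" "\<bar>te - tf\<bar> < 2 * r" "3 * r \<le> \<bar>(tc + td) / 2 - (te + tf) / 2\<bar>"
  shows "2 * r \<le> \<bar>tc - te\<bar> \<and> 2 * r \<le> \<bar>td - tf\<bar> \<or> 2 * r \<le> \<bar>tc - tf\<bar> \<and> 2 * r \<le> \<bar>td - te\<bar>"
proof -
  have "6 * r \<le> \<bar>(tc + td) - (te + tf)\<bar>"
    using assms(3) unfolding diff_divide_distrib[symmetric] abs_divide by simp
  moreover have "0 < r"
    using assms(1) abs_ge_zero[of "tc - td"] by linarith
  ultimately show ?thesis
    using assms(1,2) by (smt (verit))
qed

locale sector_chart =
  fixes X :: pt and \<theta> :: "pt \<Rightarrow> real" and V :: "pt set"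
  assumes unit: "norm X = 1"
    and nonzero: "0 \<notin> V"
    and sector: "v \<in> V \<Longrightarrow> \<bar>\<theta> v\<bar> < 2*pi/3"
    and polar: "v \<in> V \<Longrightarrow> v = norm v *\<^sub>R rot (\<theta> v) X"
begin

lemma norm_add_norm_less_if_angle_far:
  assumes lam: "lam > 2 / sqrt 3" and v: "v \<in> V" and w: "w \<in> V"
    and far: "2*pi/3 \<le> \<bar>\<theta> v - \<theta> w\<bar>"
  shows "norm v + norm w < lam * norm (v - w)"
proof -
  have "cos (\<theta> v - \<theta> w) \<le> -1/2"
    using far sector[OF v] sector[OF w] abs_triangle_ineq4[of "\<theta> v" "\<theta> w"]
    by (intro cos_le_minus_half) linarith+
  then have "norm v * norm w * cos (\<theta> v - \<theta> w) \<le> - (norm v * norm w) / 2"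
    using mult_left_mono[of _ "-1/2" "norm v * norm w"] by simp
  then have "inner v w \<le> - (norm v * norm w) / 2"
    using inner_scaled_rot[OF unit polar[OF v] polar[OF w]] by simp
  moreover have "v \<noteq> 0" "w \<noteq> 0"
    using nonzero v w by auto
  ultimately show ?thesis
    using norm_add_norm_less_if_wide_angle[OF lam] by blast
qed

lemma opposite_midpoints:
  assumes conv: "0 \<in> convex hull {ell a b | a b. {a, b} \<in> {{x, x'}, {c, d}, {e, f}}}"
    and \<theta>x: "\<theta> x = 0" and vs: "x \<in> V" "x' \<in> V" "c \<in> V" "d \<in> V" "e \<in> V" "f \<in> V"
    and width: "\<bar>\<theta> x - \<theta> x'\<bar> < pi" "\<bar>\<theta> c - \<theta> d\<bar> < pi" "\<bar>\<theta> e - \<theta> f\<bar> < pi"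
  shows "pi \<le> \<bar>(\<theta> c + \<theta> d) / 2 - (\<theta> e + \<theta> f) / 2\<bar>"
proof (rule ccontr)
  define mid where "mid a b = (\<theta> a + \<theta> b) / 2" for a b
  have mid_commute: "mid a b = mid b a" for a b
    by (simp add: mid_def add.commute)
  assume "\<not> ?thesis"
  moreover have "\<bar>mid x x' - mid c d\<bar> < pi" "\<bar>mid x x' - mid e f\<bar> < pi"
  proof -
    have rng: "\<theta> v < 2*pi/3" "- \<theta> v < 2*pi/3" if "v \<in> V" for v
      using sector[OF that] unfolding abs_less_iff by blast+
    show "\<bar>mid x x' - mid c d\<bar> < pi" "\<bar>mid x x' - mid e f\<bar> < pi"
      using \<theta>x rng[OF vs(2)] rng[OF vs(3)] rng[OF vs(4)] rng[OF vs(5)] rng[OF vs(6)]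
      unfolding abs_less_iff mid_def by argo+
  qed
  ultimately obtain m where m: "\<bar>mid x x' - m\<bar> < pi/2" "\<bar>mid c d - m\<bar> < pi/2" "\<bar>mid e f - m\<bar> < pi/2"
    using common_centre_of_close_reals[where a = "mid x x'" and b = "mid c d" and c = "mid e f" and r = "pi/2"]
    by (auto simp: not_le mid_def)
  have "0 < inner z (rot m X)" if z_ell: "z \<in> {ell a b | a b. {a, b} \<in> {{x, x'}, {c, d}, {e, f}}}" for z
  proof -
    obtain a b where z: "z = ell a b" and ab: "{a, b} \<in> {{x, x'}, {c, d}, {e, f}}"
      using z_ell by blast
    then have "a \<in> V \<and> b \<in> V \<and> \<bar>\<theta> a - \<theta> b\<bar> < pi \<and> \<bar>mid a b - m\<bar> < pi/2"
      using vs width m by (auto simp: doubleton_eq_iff mid_commute abs_minus_commute)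
    then show ?thesis
      unfolding z mid_def using inner_ell_rot_pos[OF unit polar polar] nonzero by fastforce
  qed
  with conv show False
    using zero_notin_convex_hull_if_inner_pos by blast
qed

end

lemma sector_chart_at:
  assumes x: "x \<in> V" and V0: "0 \<notin> V" and ang: "\<forall>v\<in>V - {x}. vangle x v < 2*pi/3"
  obtains X \<theta> where "sector_chart X \<theta> V" "\<theta> x = 0"
proof -
  define X where "X = x /\<^sub>R norm x"
  have x0: "x \<noteq> 0"
    using x V0 by auto
  then have X: "norm X = 1"
    by (simp add: X_def)
  have "\<exists>\<theta>. \<bar>\<theta>\<bar> < 2*pi/3 \<and> v = norm v *\<^sub>R rot \<theta> X" if "v \<in> V - {x}" for v
  proof -
    have v0: "v \<noteq> 0"
      using that V0 by auto
    then have "inner x v > - (norm x * norm v) / 2"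
      using inner_gt_of_vangle_less x0 ang that by blast
    then have "inner v X > - norm v / 2"
      using x0 by (simp add: X_def inner_commute field_simps)
    then show ?thesis
      using polar_angle_within_sector[OF X v0] by metis
  qed
  then obtain \<theta> where \<theta>: "\<And>v. v \<in> V - {x} \<Longrightarrow> \<bar>\<theta> v\<bar> < 2*pi/3 \<and> v = norm v *\<^sub>R rot (\<theta> v) X"
    by metis
  have "sector_chart X (\<theta>(x := 0)) V"
  proof
    fix v
    assume "v \<in> V"
    then show "\<bar>(\<theta>(x := 0)) v\<bar> < 2*pi/3" "v = norm v *\<^sub>R rot ((\<theta>(x := 0)) v) X"
      using \<theta> x0 by (cases "v = x"; auto simp: X_def)+
  qed (use X V0 in auto)
  then show ?thesis
    using that by simp
qed

lemma vertices_nonzero: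
  assumes lam: "lam > 1"
    and pairs: "\<forall>e\<in>M. \<exists>a b. a \<noteq> b \<and> e = {a, b}"
    and eq: "\<forall>a b. {a, b} \<in> M \<longrightarrow> norm a + norm b = lam * norm (a - b)"
  shows "0 \<notin> vertices M"
proof
  assume "0 \<in> vertices M"
  then obtain P where "P \<in> M" "0 \<in> P"
    unfolding vertices_def by blast
  moreover obtain a b where "a \<noteq> b" "P = {a, b}"
    using pairs \<open>P \<in> M\<close> by blast
  ultimately have ab: "{a, b} \<in> M" "a \<noteq> b" "a = 0 \<or> b = 0"
    by auto
  have "norm a + norm b = lam * norm (a - b)"
    using eq ab(1) by blast
  moreover have "norm (a - b) = norm a + norm b"
    using ab(3) by (auto simp: norm_minus_commute)
  moreover have "norm a + norm b > 0"
    using ab(2,3) by auto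
  ultimately show False
    using lam by simp
qed

lemma blue_notin_red_edges:
  assumes eq: "\<forall>a b. {a, b} \<in> M \<longrightarrow> norm a + norm b = lam * norm (a - b)" and "e \<in> M"
  shows "e \<notin> red_edges lam M"
  using assms unfolding red_edges_def by fastforce

lemma red_edgesI:
  "v \<in> vertices M \<Longrightarrow> w \<in> vertices M \<Longrightarrow> norm v + norm w < lam * norm (v - w) \<Longrightarrow> {v, w} \<in> red_edges lam M"
  unfolding red_edges_def by blast

lemma matching_as_three_pairs:
  assumes card: "card M = 2 \<or> card M = 3"
    and pairs: "\<forall>e\<in>M. \<exists>a b. a \<noteq> b \<and> e = {a, b}"
    and x: "x \<in> vertices M"
  obtains x' c d e f where "M = {{x, x'}, {c, d}, {e, f}}" "c \<noteq> d" "e \<noteq> f"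
proof -
  obtain P where "P \<in> M" "x \<in> P"
    using x unfolding vertices_def by blast
  moreover obtain a b where "P = {a, b}"
    using pairs \<open>P \<in> M\<close> by blast
  ultimately have ab: "{a, b} \<in> M" "x \<in> {a, b}"
    by auto
  define x' where "x' = (if x = a then b else a)"
  have x': "{x, x'} = {a, b}"
    using ab by (auto simp: x'_def)
  have rest: "card (M - {{a, b}}) = card M - 1"
    using ab(1) by (rule card_Diff_singleton)
  obtain P Q where PQ: "M - {{a, b}} = {P, Q}"
  proof (cases "card M = 2")
    case True
    then obtain P where "M - {{a, b}} = {P}"
      using rest card_1_singletonE by auto
    then show ?thesis
      using that[of P P] by simp
  next
    case False
    then have "card (M - {{a, b}}) = 2"
      using rest card by simp
    then show ?thesis
      using that unfolding card_2_iff by blast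
  qed
  have M: "M = {{x, x'}, P, Q}"
    using insert_Diff[OF ab(1)] unfolding PQ x' by simp
  obtain c d where cd: "P = {c, d}" "c \<noteq> d"
    using pairs M by blast
  obtain e f where ef: "Q = {e, f}" "e \<noteq> f"
    using pairs M by blast
  show ?thesis
    by (rule that[of x' c d e f]) (use M cd ef in simp_all)
qed

lemma alternating_4_cycle:
  assumes disj: "\<forall>e\<in>M. \<forall>f\<in>M. e \<noteq> f \<longrightarrow> e \<inter> f = {}"
    and M: "{c, d} \<in> M" "{e, f} \<in> M" "c \<noteq> d" "e \<noteq> f" "{c, d} \<noteq> {e, f}"
    and R: "{d, f} \<in> R" "{e, c} \<in> R" "{c, d} \<notin> R" "{e, f} \<notin> R"
  shows "alternating_cycle M R [c, d, f, e]"
proof -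
  have D: "{c, d} \<inter> {e, f} = {}"
    using disj M(1,2,5) by simp
  then have "{d, f} \<inter> {c, d} \<noteq> {}" "{e, c} \<inter> {c, d} \<noteq> {}" "{d, f} \<noteq> {c, d}" "{e, c} \<noteq> {c, d}"
    by auto
  then have "{d, f} \<notin> M" "{e, c} \<notin> M"
    using disj M(1) by metis+
  moreover have all4: "(\<forall>i<4. P i) \<longleftrightarrow> P 0 \<and> P 1 \<and> P 2 \<and> P 3" for P :: "nat \<Rightarrow> bool"
    by (auto simp: less_Suc_eq numeral_eq_Suc)
  moreover have "length [c, d, f, e] = 4"
    by simp
  moreover have "distinct [c, d, f, e]"
    using D M(3,4) by auto
  ultimately show ?thesis
    using M R unfolding alternating_cycle_def Let_def by (simp only: all4) (simp add: insert_commute)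
qed

lemma alternating_cycle_if_opposite_pairs:
  fixes \<theta> :: "pt \<Rightarrow> real"
  assumes disj: "\<forall>e\<in>M. \<forall>f\<in>M. e \<noteq> f \<longrightarrow> e \<inter> f = {}"
    and M: "{c, d} \<in> M" "{e, f} \<in> M" "c \<noteq> d" "e \<noteq> f"
    and blue: "{c, d} \<notin> R" "{e, f} \<notin> R"
    and red: "\<And>v w. v \<in> {c, d, e, f} \<Longrightarrow> w \<in> {c, d, e, f} \<Longrightarrow> 2 * r \<le> \<bar>\<theta> v - \<theta> w\<bar> \<Longrightarrow> {v, w} \<in> R"
    and width: "\<bar>\<theta> c - \<theta> d\<bar> < 2 * r" "\<bar>\<theta> e - \<theta> f\<bar> < 2 * r"
    and opposite: "3 * r \<le> \<bar>(\<theta> c + \<theta> d) / 2 - (\<theta> e + \<theta> f) / 2\<bar>"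
  shows "\<exists>vs. alternating_cycle M R vs"
proof -
  have ne: "{c, d} \<noteq> {e, f}"
  proof
    assume "{c, d} = {e, f}"
    then have "\<bar>(\<theta> c + \<theta> d) / 2 - (\<theta> e + \<theta> f) / 2\<bar> = 0"
      by (auto simp: doubleton_eq_iff add.commute)
    then show False
      using opposite width(1) abs_ge_zero[of "\<theta> c - \<theta> d"] by linarith
  qed
  from crosswise_far_if_opposite[OF width opposite]
  show ?thesis
  proof
    assume "2 * r \<le> \<bar>\<theta> c - \<theta> e\<bar> \<and> 2 * r \<le> \<bar>\<theta> d - \<theta> f\<bar>"
    then have "{d, f} \<in> R" "{e, c} \<in> R"
      using red by (auto simp: abs_minus_commute)
    then show ?thesis
      using alternating_4_cycle[OF disj M ne _ _ blue] by blast
  next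
    assume "2 * r \<le> \<bar>\<theta> c - \<theta> f\<bar> \<and> 2 * r \<le> \<bar>\<theta> d - \<theta> e\<bar>"
    then have "{d, e} \<in> R" "{f, c} \<in> R"
      using red by (auto simp: abs_minus_commute)
    moreover have "{f, e} \<in> M" "{c, d} \<noteq> {f, e}" "{f, e} \<notin> R"
      using M(2) ne blue(2) by (simp_all add: insert_commute)
    ultimately show ?thesis
      using alternating_4_cycle[OF disj M(1) _ M(3) _ _ _ _ blue(1), of f e] M(4) by blast
  qed
qed

theorem lemma2:
  fixes lam :: real and M :: "pt set set"
  assumes lam: "lam > 2 / sqrt 3"
    and card: "card M = 2 \<or> card M = 3"
    and pairs: "\<forall>e\<in>M. \<exists>a b. a \<noteq> b \<and> e = {a, b}"
    and disj: "\<forall>e\<in>M. \<forall>f\<in>M. e \<noteq> f \<longrightarrow> e \<inter> f = {}"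
    and eq: "\<forall>a b. {a, b} \<in> M \<longrightarrow> norm a + norm b = lam * norm (a - b)"
    and conv: "(0::pt) \<in> convex hull {ell a b | a b. {a, b} \<in> M}"
    and x: "x \<in> vertices M"
    and ang: "\<forall>y \<in> vertices M - {x}. vangle x y < 2 * pi / 3"
  shows "\<exists>vs. alternating_cycle (blue_edges M) (red_edges lam M) vs"
proof -
  have "1 < 2 / sqrt 3"
    using real_sqrt_less_mono[of 3 4] by (simp add: field_simps)
  with lam have "1 < lam"
    by linarith
  then have V0: "0 \<notin> vertices M"
    using pairs eq by (rule vertices_nonzero)
  obtain x' c d e f where M: "M = {{x, x'}, {c, d}, {e, f}}" and ne: "c \<noteq> d" "e \<noteq> f"
    by (rule matching_as_three_pairs[OF card pairs x])
  then have vs: "x \<in> vertices M" "x' \<in> vertices M" "c \<in> vertices M" "d \<in> vertices M"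
    "e \<in> vertices M" "f \<in> vertices M"
    by (auto simp: vertices_def)
  obtain X \<theta> where chart: "sector_chart X \<theta> (vertices M)" and \<theta>x: "\<theta> x = 0"
    using sector_chart_at[OF x V0 ang] by blast
  interpret sector_chart X \<theta> "vertices M"
    by (rule chart)
  have red: "{v, w} \<in> red_edges lam M"
    if "v \<in> vertices M" "w \<in> vertices M" "2*pi/3 \<le> \<bar>\<theta> v - \<theta> w\<bar>" for v w
    using red_edgesI norm_add_norm_less_if_angle_far[OF lam] that by blast
  have blue: "\<bar>\<theta> a - \<theta> b\<bar> < 2*pi/3" if "{a, b} \<in> M" for a b
    using red[of a b] blue_notin_red_edges[OF eq that] that by (auto simp: vertices_def not_le[symmetric])
  have pairs_in: "{x, x'} \<in> M" "{c, d} \<in> M" "{e, f} \<in> M"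
    using M by auto
  have "pi \<le> \<bar>(\<theta> c + \<theta> d) / 2 - (\<theta> e + \<theta> f) / 2\<bar>"
    by (rule opposite_midpoints[OF conv[unfolded M] \<theta>x vs])
      (use blue[OF pairs_in(1)] blue[OF pairs_in(2)] blue[OF pairs_in(3)] pi_gt_zero in linarith)+
  then show ?thesis
    unfolding blue_edges_def
    by (intro alternating_cycle_if_opposite_pairs[OF disj _ _ ne, where r = "pi/3" and \<theta> = \<theta>])
      (use M blue_notin_red_edges[OF eq] red vs blue in \<open>auto simp: M\<close>)
qed

end
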